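(* There exist absolute constants $C_0,C_1>0$ such that for every integer $t>C_0$, setting $I=[-C_0\sqrt t,\ C_0\sqrt t]$, every nonzero polynomial $p:\mathbb R\to\mathbb R$ of degree at most $t$ with $\mathbf E_{x\sim\mathcal N(0,1)}[p(x)]=0$ satisfies $\inf_{x\in I}p(x)<0$ and $$\frac{\sup_{x\in I}p(x)}{\big|\inf_{x\in I}p(x)\big|}\ \le\ 2^{C_1 t}.$$ *)

theory Defs
  imports "HOL-Probability.Probability" "HOL-Computational_Algebra.Polynomial"
begin

definition gauss_expect :: "(real \<Rightarrow> real) \<Rightarrow> real" where
  "gauss_expect f = (\<integral>x. std_normal_density x * f x \<partial>lborel)"

end

theory Submission
  imports Defs
begin

text \<open>
  Rescale to \<open>q(y) = p(R y)\<close> with \<open>R = 20 sqrt t\<close> and let \<open>N\<close> be the maximum of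
  \<open>|q|\<close> on \<open>[0, 1/4]\<close>. Lagrange interpolation at equispaced nodes bounds every
  coefficient of \<open>q\<close> by \<open>96^t N\<close>, so \<open>|p| \<le> (t+1) 96^t N\<close> on \<open>I = [-R, R]\<close>,
  and outside \<open>I\<close> the polynomial grows at most like \<open>(x/R)^t\<close>. If \<open>q = -N\<close> at the
  peak, the minimum of \<open>p\<close> on \<open>I\<close> is at most \<open>-N\<close>. Otherwise the Lipschitz bound
  that comes with the coefficient bound keeps \<open>p \<ge> N/2\<close> on a short interval around the
  peak, where the Gaussian density is at least \<open>3^(-50 t)/3\<close>. As \<open>E p = 0\<close>, this
  positive mass, minus the contribution of the tail outside \<open>I\<close> (controlled by the
  moments \<open>E x^(2s) \<le> s^s\<close>), must be balanced by the negative part of \<open>p\<close> on \<open>I\<close>;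
  this gives \<open>-min p \<ge> (t+1) 96^t N / 2^(110 t)\<close>.
\<close>

lemma poly_eq_sum_coeff_atMost:
  fixes x :: "'a::{comm_semiring_0,semiring_1}"
  assumes "degree p \<le> t"
  shows "poly p x = (\<Sum>i\<le>t. coeff p i * x ^ i)"
proof -
  have "poly p x = (\<Sum>i\<le>degree p. coeff p i * x ^ i)" by (rule poly_altdef)
  also have "\<dots> = (\<Sum>i\<le>t. coeff p i * x ^ i)"
    by (rule sum.mono_neutral_left) (use assms in \<open>auto simp: coeff_eq_0\<close>)
  finally show ?thesis .
qed

lemma abs_poly_le_coeff_bound:
  fixes q :: "real poly"
  assumes deg: "degree q \<le> t" and K: "\<forall>i. \<bar>coeff q i\<bar> \<le> K"
  shows "\<bar>poly q y\<bar> \<le> real (Suc t) * K * max 1 \<bar>y\<bar> ^ t"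
proof -
  have "\<bar>poly q y\<bar> \<le> (\<Sum>i\<le>t. \<bar>coeff q i * y ^ i\<bar>)"
    unfolding poly_eq_sum_coeff_atMost[OF deg] by (rule sum_abs)
  also have "\<dots> \<le> (\<Sum>i\<le>t. K * max 1 \<bar>y\<bar> ^ t)"
  proof (rule sum_mono)
    fix i assume "i \<in> {..t}"
    then have "\<bar>y\<bar> ^ i \<le> max 1 \<bar>y\<bar> ^ t"
      by (meson atMost_iff max.cobounded1 max.cobounded2 order.trans power_increasing
          power_mono abs_ge_zero)
    then show "\<bar>coeff q i * y ^ i\<bar> \<le> K * max 1 \<bar>y\<bar> ^ t"
      using K by (simp add: abs_mult power_abs) (intro mult_mono, auto)
  qed
  finally show ?thesis by simp
qed

lemma abs_power_diff_le:
  fixes y z :: real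
  assumes "\<bar>y\<bar> \<le> 1" "\<bar>z\<bar> \<le> 1"
  shows "\<bar>y ^ i - z ^ i\<bar> \<le> real i * \<bar>y - z\<bar>"
proof (induction i)
  case 0 then show ?case by simp
next
  case (Suc i)
  have "y ^ Suc i - z ^ Suc i = y * (y ^ i - z ^ i) + z ^ i * (y - z)" by (simp add: algebra_simps)
  then have "\<bar>y ^ Suc i - z ^ Suc i\<bar> \<le> \<bar>y\<bar> * \<bar>y ^ i - z ^ i\<bar> + \<bar>z\<bar> ^ i * \<bar>y - z\<bar>"
    by (metis abs_mult abs_triangle_ineq power_abs)
  also have "\<dots> \<le> 1 * (real i * \<bar>y - z\<bar>) + 1 * \<bar>y - z\<bar>"
    using assms Suc by (intro add_mono mult_mono) (auto simp: power_le_one)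
  finally show ?case by (simp add: algebra_simps)
qed

lemma abs_poly_diff_le_coeff_bound:
  fixes q :: "real poly"
  assumes deg: "degree q \<le> t" and K: "\<forall>i. \<bar>coeff q i\<bar> \<le> K"
    and y: "\<bar>y\<bar> \<le> 1" and z: "\<bar>z\<bar> \<le> 1"
  shows "\<bar>poly q y - poly q z\<bar> \<le> real (Suc t) * real t * K * \<bar>y - z\<bar>"
proof -
  have "poly q y - poly q z = (\<Sum>i\<le>t. coeff q i * (y ^ i - z ^ i))"
    by (simp add: poly_eq_sum_coeff_atMost[OF deg] sum_subtractf[symmetric] algebra_simps)
  then have "\<bar>poly q y - poly q z\<bar> \<le> (\<Sum>i\<le>t. \<bar>coeff q i * (y ^ i - z ^ i)\<bar>)"
    by (simp add: sum_abs)
  also have "\<dots> \<le> (\<Sum>i\<le>t. K * (real t * \<bar>y - z\<bar>))"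
  proof (rule sum_mono)
    fix i assume "i \<in> {..t}"
    then have "\<bar>y ^ i - z ^ i\<bar> \<le> real t * \<bar>y - z\<bar>"
      using abs_power_diff_le[OF y z, of i] by (meson atMost_iff abs_ge_zero mult_right_mono of_nat_le_iff order_trans)
    then show "\<bar>coeff q i * (y ^ i - z ^ i)\<bar> \<le> K * (real t * \<bar>y - z\<bar>)"
      using K by (simp add: abs_mult) (intro mult_mono, auto)
  qed
  finally show ?thesis by (simp add: algebra_simps)
qed

lemma abs_coeff_prod_linear_le_binomial:
  fixes a :: "'b \<Rightarrow> real"
  assumes "finite F" "\<forall>k\<in>F. \<bar>a k\<bar> \<le> 1"
  shows "\<bar>coeff (\<Prod>k\<in>F. [:- a k, 1:]) i\<bar> \<le> real (card F choose i)"
  using assms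
proof (induction F arbitrary: i rule: finite_induct)
  case empty
  then show ?case by (cases i) auto
next
  case (insert x F)
  let ?P = "\<Prod>k\<in>F. [:- a k, 1:]"
  have prod: "(\<Prod>k\<in>insert x F. [:- a k, 1:]) = smult (- a x) ?P + pCons 0 ?P"
    using insert by (simp add: mult_pCons_left)
  have ax: "\<bar>a x\<bar> \<le> 1" using insert by auto
  show ?case
  proof (cases i)
    case 0
    have "\<bar>a x\<bar> * \<bar>coeff ?P 0\<bar> \<le> 1 * real (card F choose 0)"
      using insert.IH[of 0] insert.prems ax by (intro mult_mono) auto
    then show ?thesis using prod 0 insert by (simp add: abs_mult)
  next
    case (Suc j)
    have "\<bar>coeff (smult (- a x) ?P + pCons 0 ?P) (Suc j)\<bar>
        \<le> \<bar>a x\<bar> * \<bar>coeff ?P (Suc j)\<bar> + \<bar>coeff ?P j\<bar>"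
      using abs_triangle_ineq4[of "coeff ?P j" "a x * coeff ?P (Suc j)"] by (simp add: abs_mult)
    also have "\<dots> \<le> 1 * real (card F choose Suc j) + real (card F choose j)"
      using insert.IH[of "Suc j"] insert.IH[of j] insert.prems ax
      by (intro add_mono mult_mono) auto
    finally show ?thesis using prod Suc insert by simp
  qed
qed

lemma lagrange_interpolation:
  fixes y :: "nat \<Rightarrow> 'a::field" and q :: "'a poly"
  assumes inj: "inj_on y {..t}" and deg: "degree q \<le> t"
  shows "q = (\<Sum>j\<le>t. smult (poly q (y j) / (\<Prod>k\<in>{..t}-{j}. (y j - y k)))
                         (\<Prod>k\<in>{..t}-{j}. [:- y k, 1:]))"
    (is "q = (\<Sum>j\<le>t. ?L j)")
proof (rule poly_eqI_degree[where A="y ` {..t}"])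
  have card: "card (y ` {..t}) = Suc t" using inj by (simp add: card_image)
  show "degree q < card (y ` {..t})" using card deg by simp
  have "degree (\<Sum>j\<le>t. ?L j) \<le> t"
  proof (rule degree_sum_le)
    fix j assume j: "j \<in> {..t}"
    have "degree (\<Prod>k\<in>{..t}-{j}. [:- y k, 1:]) \<le> (\<Sum>k\<in>{..t}-{j}. degree [:- y k, 1:])"
      using degree_prod_sum_le[of "{..t}-{j}" "\<lambda>k. [:- y k, 1:]"] by (simp add: o_def)
    also have "\<dots> = t" using j by simp
    finally show "degree (?L j) \<le> t"
      using degree_smult_le order_trans by blast
  qed simp
  then show "degree (\<Sum>j\<le>t. ?L j) < card (y ` {..t})" using card by simp
  fix z assume "z \<in> y ` {..t}"
  then obtain i where i: "i \<le> t" "z = y i" by auto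
  have vanish: "poly (?L j) (y i) = 0" if "j \<in> {..t} - {i}" for j
  proof -
    have "(\<Prod>k\<in>{..t}-{j}. poly [:- y k, 1:] (y i)) = 0"
      using that i by (intro prod_zero) auto
    then show ?thesis by (simp add: poly_prod)
  qed
  have "(\<Prod>k\<in>{..t}-{i}. (y i - y k)) \<noteq> 0"
    using inj i by (auto simp: inj_on_def)
  then have "poly (?L i) (y i) = poly q (y i)" by (simp add: poly_prod)
  moreover have "poly (\<Sum>j\<le>t. ?L j) (y i) = poly (?L i) (y i)"
  proof -
    have "(\<Sum>j\<in>{..t}-{i}. poly (?L j) (y i)) = 0" by (rule sum.neutral) (use vanish in blast)
    then show ?thesis unfolding poly_sum using i by (subst sum.remove[of _ i]) auto
  qed
  ultimately show "poly q z = poly (\<Sum>j\<le>t. ?L j) z" using i by simp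
qed

lemma power_self_le_three_power_fact: "real t ^ t \<le> 3 ^ t * fact t"
proof -
  have "real t ^ t / fact t \<le> (\<Sum>n. real t ^ n /\<^sub>R fact n)"
    using sum_le_suminf[of "\<lambda>n. real t ^ n /\<^sub>R fact n" "{t}"] summable_exp_generic[of "real t"]
    by (simp add: divide_inverse mult.commute)
  also have "\<dots> = exp (real t)" by (rule sums_unique[OF exp_converges, symmetric])
  also have "\<dots> = exp 1 ^ t" by (simp flip: exp_of_nat_mult)
  also have "\<dots> \<le> 3 ^ t" by (rule power_mono) (use exp_le in auto)
  finally show ?thesis by (simp add: divide_le_eq mult.commute)
qed

lemma prod_abs_diff_of_nat:
  assumes "j \<le> t"
  shows "(\<Prod>k\<in>{..t}-{j}. \<bar>real j - real k\<bar>) = fact j * fact (t - j)"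
  using assms
proof (induction t rule: dec_induct)
  case base
  have "(\<Prod>k\<in>{..j}-{j}. \<bar>real j - real k\<bar>) = (\<Prod>k\<in>{0..<j}. real (j - k))"
    by (rule prod.cong) auto
  then show ?case by (simp add: fact_prod_rev)
next
  case (step n)
  have "{..Suc n}-{j} = insert (Suc n) ({..n}-{j})" using step by auto
  then show ?case using step by (simp add: Suc_diff_le)
qed

lemma abs_prod_equispaced_nodes_ge:
  assumes "t \<ge> 1" "c > 0" "j \<le> t"
  shows "(c / 6) ^ t \<le> \<bar>\<Prod>k\<in>{..t}-{j}. c * real j / real t - c * real k / real t\<bar>"
proof -
  have "\<bar>\<Prod>k\<in>{..t}-{j}. c * real j / real t - c * real k / real t\<bar>
      = (\<Prod>k\<in>{..t}-{j}. c / real t * \<bar>real j - real k\<bar>)"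
  proof -
    have "c * real j / real t - c * real k / real t = c / real t * (real j - real k)" for k
      by (simp add: diff_divide_distrib right_diff_distrib)
    then show ?thesis using assms unfolding abs_prod by (simp add: abs_mult)
  qed
  also have "\<dots> = (c / real t) ^ t * (fact j * fact (t - j))"
    using assms by (simp only: prod.distrib prod_constant prod_abs_diff_of_nat) simp
  finally have prod_eq: "\<bar>\<Prod>k\<in>{..t}-{j}. c * real j / real t - c * real k / real t\<bar>
      = (c / real t) ^ t * (fact j * fact (t - j))" .
  have "fact t = fact j * fact (t - j) * real (t choose j)"
    using binomial_fact_lemma[OF assms(3)] by (metis of_nat_fact of_nat_mult)
  also have "\<dots> \<le> fact j * fact (t - j) * 2 ^ t"
    using binomial_le_pow2[of t j] by (intro mult_left_mono) (simp_all flip: of_nat_le_iff)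
  finally have "3 ^ t * fact t \<le> 3 ^ t * (fact j * fact (t - j) * (2::real) ^ t)"
    by (rule mult_left_mono) simp
  then have "real t ^ t \<le> 6 ^ t * (fact j * fact (t - j))"
    using power_self_le_three_power_fact[of t]
    by (simp add: power_mult_distrib [symmetric] mult_ac)
  then have "(c / real t) ^ t * real t ^ t \<le> (c / real t) ^ t * (6 ^ t * (fact j * fact (t - j)))"
    using assms by (intro mult_left_mono) auto
  then have "c ^ t \<le> 6 ^ t * ((c / real t) ^ t * (fact j * fact (t - j)))"
    using assms by (simp add: power_mult_distrib [symmetric] mult_ac)
  then show ?thesis
    unfolding prod_eq by (simp add: power_divide divide_le_eq mult.commute)
qed

lemma real_Suc_le_two_power: "real (Suc n) \<le> 2 ^ n"
proof -
  have "Suc n \<le> 2 ^ n" using less_exp[of n] by (simp only: Suc_le_eq)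
  then show ?thesis by (metis of_nat_le_iff of_nat_numeral of_nat_power)
qed

lemma abs_coeff_le_of_bounded_on_interval:
  fixes q :: "real poly"
  assumes t: "t \<ge> 1" and c: "0 < c" "c \<le> 1" and deg: "degree q \<le> t"
    and bounded: "\<forall>y\<in>{0..c}. \<bar>poly q y\<bar> \<le> N"
  shows "\<bar>coeff q i\<bar> \<le> (24 / c) ^ t * N"
proof -
  define y where "y k = c * real k / real t" for k
  have y_in: "y k \<in> {0..c}" if "k \<le> t" for k
    using that t c by (auto simp: y_def field_simps)
  have "\<bar>poly q 0\<bar> \<le> N" using bounded c by simp
  then have N: "N \<ge> 0" by linarith
  define d where "d j = (\<Prod>k\<in>{..t}-{j}. (y j - y k))" for j
  define P where "P j = (\<Prod>k\<in>{..t}-{j}. [:- y k, 1:])" for j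
  have "inj_on y {..t}" using t c by (auto simp: inj_on_def y_def)
  then have interpolation: "q = (\<Sum>j\<le>t. smult (poly q (y j) / d j) (P j))"
    unfolding d_def P_def using deg by (rule lagrange_interpolation)
  have "\<bar>coeff q i\<bar> = \<bar>\<Sum>j\<le>t. poly q (y j) / d j * coeff (P j) i\<bar>"
    by (subst interpolation) (simp add: coeff_sum)
  also have "\<dots> \<le> (\<Sum>j\<le>t. \<bar>poly q (y j)\<bar> * (1 / \<bar>d j\<bar>) * \<bar>coeff (P j) i\<bar>)"
    by (rule order_trans[OF sum_abs]) (simp add: abs_mult)
  also have "\<dots> \<le> (\<Sum>j\<le>t. N * (6 / c) ^ t * 2 ^ t)"
  proof (rule sum_mono)
    fix j assume j: "j \<in> {..t}"
    have "(c / 6) ^ t \<le> \<bar>d j\<bar>"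
      unfolding d_def y_def using abs_prod_equispaced_nodes_ge[OF t c(1)] j by simp
    then have "1 / \<bar>d j\<bar> \<le> (6 / c) ^ t"
      using c by (simp add: power_divide divide_simps mult.commute)
    moreover have "\<bar>coeff (P j) i\<bar> \<le> 2 ^ t"
    proof -
      have "\<bar>coeff (P j) i\<bar> \<le> real (card ({..t}-{j}) choose i)"
        unfolding P_def using y_in c by (intro abs_coeff_prod_linear_le_binomial) force+
      also have "\<dots> \<le> 2 ^ t" using j binomial_le_pow2[of t i] by (simp flip: of_nat_le_iff)
      finally show ?thesis .
    qed
    ultimately show "\<bar>poly q (y j)\<bar> * (1 / \<bar>d j\<bar>) * \<bar>coeff (P j) i\<bar>
        \<le> N * (6 / c) ^ t * 2 ^ t"
      using bounded y_in j N c by (intro mult_mono) auto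
  qed
  also have "\<dots> = real (Suc t) * (12 / c) ^ t * N"
    by (simp add: power_mult_distrib [symmetric])
  also have "\<dots> \<le> 2 ^ t * (12 / c) ^ t * N"
    using N c real_Suc_le_two_power[of t] by (intro mult_right_mono) auto
  also have "\<dots> = (24 / c) ^ t * N" by (simp add: power_mult_distrib [symmetric])
  finally show ?thesis .
qed

lemma fact_add_le: "fact (a + b) \<le> fact a * (a + b) ^ b"
proof (induction b)
  case 0 then show ?case by simp
next
  case (Suc b)
  have "fact (a + Suc b) = (a + Suc b) * fact (a + b)" by simp
  also have "\<dots> \<le> (a + Suc b) * (fact a * (a + b) ^ b)" by (rule mult_left_mono[OF Suc.IH]) simp
  also have "\<dots> \<le> (a + Suc b) * (fact a * (a + Suc b) ^ b)"
    by (intro mult_left_mono power_mono) auto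
  also have "\<dots> = fact a * (a + Suc b) ^ Suc b" by (simp add: algebra_simps)
  finally show ?case .
qed

lemma std_normal_even_moment_le: "(\<integral>x. std_normal_density x * x ^ (2 * s) \<partial>lborel) \<le> real s ^ s"
proof -
  have "real (fact (2 * s)) \<le> real (fact s * (2 * s) ^ s)"
    using fact_add_le[of s s] by (simp only: of_nat_le_iff mult_2)
  then have "(fact (2 * s) :: real) / (2 ^ s * fact s) \<le> fact s * (2 * real s) ^ s / (2 ^ s * fact s)"
    by (intro divide_right_mono) simp_all
  also have "\<dots> = real s ^ s" by (simp add: power_mult_distrib)
  finally show ?thesis by (simp add: integral_std_normal_moment_even)
qed

lemma integrable_std_normal_poly: "integrable lborel (\<lambda>x. std_normal_density x * poly p x)"
proof -
  have "(\<lambda>x. std_normal_density x * poly p x)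
      = (\<lambda>x. \<Sum>i\<le>degree p. coeff p i * (std_normal_density x * x ^ i))"
    by (auto simp: poly_altdef sum_distrib_left algebra_simps)
  then show ?thesis
    by (auto intro!: integrable_sum integrable_mult_right integrable_std_normal_moment)
qed

lemma std_normal_density_ge:
  assumes "x\<^sup>2 \<le> 2 * real n"
  shows "1 / (3 * 3 ^ n) \<le> std_normal_density x"
proof -
  have "exp (real n) = exp 1 ^ n" by (simp flip: exp_of_nat_mult)
  also have "\<dots> \<le> 3 ^ n" by (rule power_mono) (use exp_le in auto)
  moreover have "exp (x\<^sup>2 / 2) \<le> exp (real n)" using assms by simp
  ultimately have "1 / 3 ^ n \<le> exp (- (x\<^sup>2 / 2))"
    by (simp add: exp_minus divide_simps)
  moreover have "sqrt (2 * pi) \<le> 3"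
    using real_sqrt_le_mono[of "2 * pi" 9] pi_less_4 by simp
  ultimately have "(1 / 3 ^ n) / 3 \<le> exp (- (x\<^sup>2 / 2)) / sqrt (2 * pi)"
    by (intro frac_le) auto
  then show ?thesis unfolding std_normal_density_def by simp
qed

lemma std_normal_weighted_poly_ge:
  fixes p :: "real poly"
  assumes S: "{u..v} \<subseteq> I"
    and peak: "c \<ge> 0" "\<forall>x\<in>{u..v}. c \<le> poly p x"
    and density: "\<phi> \<ge> 0" "\<forall>x\<in>{u..v}. \<phi> \<le> std_normal_density x"
    and lower: "M \<ge> 0" "\<forall>x\<in>I. - M \<le> poly p x"
    and tail: "B \<ge> 0" "\<forall>x. x \<notin> I \<longrightarrow> - (B * x ^ (2 * s)) \<le> poly p x"
  shows "c * \<phi> * indicator {u..v} x - M * std_normal_density x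
      - B * (std_normal_density x * x ^ (2 * s)) \<le> std_normal_density x * poly p x"
proof -
  have B_term: "0 \<le> B * (std_normal_density x * x ^ (2 * s))"
    using tail(1) by (simp add: power_mult)
  have M_term: "0 \<le> M * std_normal_density x" using lower(1) by simp
  consider "x \<in> {u..v}" | "x \<in> I - {u..v}" | "x \<notin> I" using S by blast
  then show ?thesis
  proof cases
    case 1
    then have "c * \<phi> \<le> poly p x * std_normal_density x"
      using peak density by (intro mult_mono') auto
    then show ?thesis using B_term M_term 1 by (simp add: mult.commute)
  next
    case 2
    then have "std_normal_density x * - M \<le> std_normal_density x * poly p x"
      using lower by (intro mult_left_mono) auto
    then show ?thesis using B_term 2 by (simp add: mult.commute)
  next
    case 3
    then have "std_normal_density x * - (B * x ^ (2 * s)) \<le> std_normal_density x * poly p x"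
      using tail by (intro mult_left_mono) auto
    moreover have "x \<notin> {u..v}" using 3 S by blast
    ultimately show ?thesis using M_term by (simp add: mult_ac)
  qed
qed

lemma mean_zero_poly_negative_part_ge:
  fixes p :: "real poly"
  assumes mean: "gauss_expect (poly p) = 0"
    and S: "u \<le> v" "{u..v} \<subseteq> I"
    and peak: "c \<ge> 0" "\<forall>x\<in>{u..v}. c \<le> poly p x"
    and density: "\<phi> \<ge> 0" "\<forall>x\<in>{u..v}. \<phi> \<le> std_normal_density x"
    and lower: "\<forall>x\<in>I. m \<le> poly p x"
    and tail: "B \<ge> 0" "\<forall>x. x \<notin> I \<longrightarrow> - (B * x ^ (2 * s)) \<le> poly p x"
  shows "c * \<phi> * (v - u) - B * real s ^ s \<le> max (- m) 0"
proof -
  define M where "M = max (- m) 0"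
  define g where "g = (\<lambda>x. c * \<phi> * indicator {u..v} x - M * std_normal_density x
      - B * (std_normal_density x * x ^ (2 * s)))"
  have g_le: "g x \<le> std_normal_density x * poly p x" for x
    unfolding g_def using S(2) peak density lower tail
    by (intro std_normal_weighted_poly_ge) (auto simp: M_def)
  have int_indicator: "integrable lborel (indicator {u..v} :: real \<Rightarrow> real)"
    by (intro integrable_real_indicator) (auto simp: emeasure_lborel_Icc_eq)
  have int_moment: "integrable lborel (\<lambda>x. std_normal_density x * x ^ (2 * s))"
    by (rule integrable_std_normal_moment)
  have "integrable lborel g"
    unfolding g_def using int_indicator int_moment by simp
  then have "integral\<^sup>L lborel g \<le> (\<integral>x. std_normal_density x * poly p x \<partial>lborel)"
    by (rule Bochner_Integration.integral_mono[OF _ integrable_std_normal_poly g_le])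
  also have "\<dots> = 0" using mean by (simp add: gauss_expect_def)
  finally have "integral\<^sup>L lborel g \<le> 0" .
  moreover have "integral\<^sup>L lborel g
      = c * \<phi> * (v - u) - M - B * (\<integral>x. std_normal_density x * x ^ (2 * s) \<partial>lborel)"
    using int_indicator int_moment S(1) unfolding g_def by simp
  moreover have "B * (\<integral>x. std_normal_density x * x ^ (2 * s) \<partial>lborel) \<le> B * real s ^ s"
    using std_normal_even_moment_le tail(1) by (rule mult_left_mono)
  ultimately show ?thesis by (simp add: M_def)
qed

lemma poly_pcompose_scale: "poly (pcompose p [:0, R:]) y = poly p (R * y)"
  by (simp add: poly_pcompose mult.commute)

lemma abs_poly_le_rescaled_coeff_bound:
  fixes p :: "real poly"
  assumes R: "R > 0" and deg: "degree p \<le> t"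
    and coeffs: "\<forall>i. \<bar>coeff (pcompose p [:0, R:]) i\<bar> \<le> K"
  shows "\<bar>poly p x\<bar> \<le> real (Suc t) * K * max 1 (\<bar>x\<bar> / R) ^ t"
proof -
  have "degree (pcompose p [:0, R:]) \<le> t" using deg by (simp add: degree_pcompose)
  from abs_poly_le_coeff_bound[OF this coeffs, of "x / R"]
  show ?thesis using R by (simp add: poly_pcompose_scale abs_div)
qed

lemma numeric_growth_le_two_power:
  assumes "t \<ge> 1"
  shows "12 * real t * (real t + 1)\<^sup>2 * 96 ^ (2 * t) * 3 ^ (50 * t) \<le> 2 ^ (110 * t)"
proof -
  have "12 * real t * (real t + 1)\<^sup>2 \<le> 12 ^ t * 2 ^ t * (2 ^ t)\<^sup>2"
    using assms real_Suc_le_two_power[of t] real_Suc_le_two_power[of "t - 1"]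
      power_increasing[of 1 t "12::real"]
    by (intro mult_mono power_mono) auto
  also have "\<dots> = 96 ^ t" by (simp add: power2_eq_square flip: power_mult_distrib)
  finally have "12 * real t * (real t + 1)\<^sup>2 * 96 ^ (2 * t) * 3 ^ (50 * t)
      \<le> 96 ^ t * 96 ^ (2 * t) * 3 ^ (50 * t)"
    by (intro mult_right_mono) auto
  also have "\<dots> = (96 ^ 3 * 3 ^ 50) ^ t"
    by (simp only: power_mult_distrib power_mult [symmetric] power_add [symmetric]) simp
  also have "\<dots> \<le> (2 ^ 110) ^ t" by (intro power_mono) auto
  finally show ?thesis by (simp add: power_mult)
qed

lemma peak_mass_ge:
  assumes t: "t \<ge> 1" and R: "R \<ge> 1" and N: "N \<ge> 0"
  defines "\<delta> \<equiv> 1 / (2 * real t * (real t + 1) * 96 ^ t)"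
  shows "2 * (real (Suc t) * 96 ^ t * N) / 2 ^ (110 * t)
    \<le> N / 2 * (1 / (3 * 3 ^ (50 * t))) * (R * (y + \<delta>) - R * (y - \<delta>))"
proof -
  define D where "D = 12 * real t * (real t + 1)\<^sup>2 * 96 ^ (2 * t) * 3 ^ (50 * t)"
  have D: "0 < D" "D \<le> 2 ^ (110 * t)" using t numeric_growth_le_two_power[OF t] by (auto simp: D_def)
  have "2 * (real (Suc t) * 96 ^ t * N) / 2 ^ (110 * t) \<le> 2 * (real (Suc t) * 96 ^ t * N) / D"
    using D N by (intro divide_left_mono) auto
  also have "\<dots> = N / (6 * real t * (real t + 1) * 96 ^ t * 3 ^ (50 * t))"
  proof -
    have "D = (2 * (real (Suc t) * 96 ^ t)) * (6 * real t * (real t + 1) * 96 ^ t * 3 ^ (50 * t))"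
      unfolding D_def power2_eq_square mult_2 power_add by (simp add: ac_simps)
    then show ?thesis using t by (simp add: divide_simps)
  qed
  also have "\<dots> = N / 2 * (1 / (3 * 3 ^ (50 * t))) * (2 * \<delta>)"
    by (simp add: \<delta>_def)
  also have "\<dots> \<le> N / 2 * (1 / (3 * 3 ^ (50 * t))) * (R * (y + \<delta>) - R * (y - \<delta>))"
  proof -
    have "1 * (2 * \<delta>) \<le> R * (2 * \<delta>)" using R by (intro mult_right_mono) (auto simp: \<delta>_def)
    then show ?thesis using N by (intro mult_left_mono) (auto simp: algebra_simps)
  qed
  finally show ?thesis .
qed

lemma tail_term_le:
  assumes t: "t \<ge> 1" and R: "R = 20 * sqrt (real t)" and L: "L \<ge> 0"
  shows "L / R ^ (2 * (50 * t)) * real (50 * t) ^ (50 * t) \<le> L / 2 ^ (110 * t)"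
proof -
  have "R\<^sup>2 = 8 * real (50 * t)" by (simp add: R power_mult_distrib)
  then have "R ^ (2 * (50 * t)) = 8 ^ (50 * t) * real (50 * t) ^ (50 * t)"
    by (simp only: power_mult power_mult_distrib)
  then have "L / R ^ (2 * (50 * t)) * real (50 * t) ^ (50 * t) = L / 8 ^ (50 * t)"
    using t by simp
  also have "\<dots> \<le> L / 2 ^ (110 * t)"
  proof (rule divide_left_mono)
    have "(2::real) ^ (110 * t) \<le> 2 ^ (150 * t)" by (rule power_increasing) auto
    then show "(2::real) ^ (110 * t) \<le> 8 ^ (50 * t)" by (simp add: power_mult)
  qed (use L in auto)
  finally show ?thesis .
qed

lemma rescaled_poly_tail_ge:
  fixes p :: "real poly"
  assumes R: "R > 0" and deg: "degree p \<le> t" and K: "K \<ge> 0"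
    and coeffs: "\<forall>i. \<bar>coeff (pcompose p [:0, R:]) i\<bar> \<le> K"
    and k: "t \<le> 2 * k" and x: "x \<notin> {-R..R}"
  shows "- (real (Suc t) * K / R ^ (2 * k) * x ^ (2 * k)) \<le> poly p x"
proof -
  have x_R: "1 \<le> \<bar>x\<bar> / R" using x R by (auto simp: field_simps)
  have "\<bar>poly p x\<bar> \<le> real (Suc t) * K * max 1 (\<bar>x\<bar> / R) ^ t"
    by (rule abs_poly_le_rescaled_coeff_bound[OF R deg coeffs])
  also have "\<dots> = real (Suc t) * K * (\<bar>x\<bar> / R) ^ t" using x_R by (simp add: max_def)
  also have "\<dots> \<le> real (Suc t) * K * (\<bar>x\<bar> / R) ^ (2 * k)"
    using x_R k K by (intro mult_left_mono power_increasing) auto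
  also have "\<dots> = real (Suc t) * K / R ^ (2 * k) * x ^ (2 * k)"
    by (simp add: power_divide power_even_abs)
  finally show ?thesis by linarith
qed

lemma rescaled_poly_near_peak_ge:
  fixes p :: "real poly"
  assumes R: "R > 0" and deg: "degree p \<le> t"
    and coeffs: "\<forall>i. \<bar>coeff (pcompose p [:0, R:]) i\<bar> \<le> K"
    and y: "\<bar>y\<bar> \<le> 1" and x: "\<bar>x\<bar> \<le> R"
    and close: "real (Suc t) * real t * K * \<bar>x / R - y\<bar> \<le> \<epsilon>"
  shows "poly p (R * y) - \<epsilon> \<le> poly p x"
proof -
  have "degree (pcompose p [:0, R:]) \<le> t" using deg by (simp add: degree_pcompose)
  moreover have "\<bar>x / R\<bar> \<le> 1" using x R by (simp add: abs_div divide_le_eq)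
  ultimately have "\<bar>poly p x - poly p (R * y)\<bar> \<le> real (Suc t) * real t * K * \<bar>x / R - y\<bar>"
    using abs_poly_diff_le_coeff_bound[OF _ coeffs _ y, of t "x / R"] R
    by (simp add: poly_pcompose_scale)
  then show ?thesis using close by linarith
qed

lemma rescaled_poly_ge_half_near_peak:
  fixes p :: "real poly"
  assumes t: "t \<ge> 1" and R: "R \<ge> 1" and deg: "degree p \<le> t"
    and coeffs: "\<forall>i. \<bar>coeff (pcompose p [:0, R:]) i\<bar> \<le> 96 ^ t * N"
    and peak: "\<bar>y\<bar> \<le> 1/4" "poly p (R * y) = N" "N \<ge> 0"
  defines "\<delta> \<equiv> 1 / (2 * real t * (real t + 1) * 96 ^ t)"
  assumes x: "x \<in> {R * (y - \<delta>) .. R * (y + \<delta>)}"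
  shows "\<bar>x\<bar> \<le> R / 2" and "N / 2 \<le> poly p x"
proof -
  have "2 * 1 * (1 + 1) * 1 \<le> 2 * real t * (real t + 1) * (96::real) ^ t"
    using t by (intro mult_mono) (auto simp: one_le_power)
  then have \<delta>: "0 < \<delta>" "\<delta> \<le> 1/4" by (auto simp: \<delta>_def divide_simps)
  have near: "\<bar>x / R - y\<bar> \<le> \<delta>" using x R by (auto simp: abs_le_iff field_simps)
  then have "\<bar>x / R\<bar> \<le> 1/2" using peak(1) \<delta> by (auto simp: abs_le_iff)
  then show half: "\<bar>x\<bar> \<le> R / 2" using R by (simp add: abs_div field_simps)
  \<comment> \<open>\<open>\<delta>\<close> makes the Lipschitz bound of \<open>p(R \<cdot>)\<close> over distance \<open>\<delta>\<close> exactly \<open>N/2\<close>.\<close>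
  have "real (Suc t) * real t * (96 ^ t * N) * \<bar>x / R - y\<bar>
      \<le> real (Suc t) * real t * (96 ^ t * N) * \<delta>"
    using near peak(3) by (intro mult_left_mono) auto
  also have "\<dots> = N / 2 * ((2 * real t * (real t + 1) * 96 ^ t) * \<delta>)"
    by (simp add: algebra_simps)
  also have "\<dots> = N / 2" using t by (simp add: \<delta>_def)
  finally have "poly p (R * y) - N / 2 \<le> poly p x"
    using R half peak(1) by (intro rescaled_poly_near_peak_ge[OF _ deg coeffs]) auto
  then show "N / 2 \<le> poly p x" using peak(2) by simp
qed

lemma positive_peak_forces_negative_min:
  fixes p :: "real poly"
  assumes t: "t \<ge> 1" and deg: "degree p \<le> t" and mean: "gauss_expect (poly p) = 0"
    and R: "R = 20 * sqrt (real t)"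
    and coeffs: "\<forall>i. \<bar>coeff (pcompose p [:0, R:]) i\<bar> \<le> 96 ^ t * N"
    and peak: "\<bar>y\<bar> \<le> 1/4" "poly p (R * y) = N" "N > 0"
    and lower: "\<forall>x\<in>{-R..R}. m \<le> poly p x"
  shows "real (Suc t) * 96 ^ t * N \<le> 2 ^ (110 * t) * - m"
proof -
  have "sqrt (real t) \<ge> 1" using t by simp
  then have R1: "R \<ge> 1" unfolding R by linarith
  define L where "L = real (Suc t) * 96 ^ t * N"
  define \<delta> where "\<delta> = 1 / (2 * real t * (real t + 1) * 96 ^ t)"
  define S where "S = {R * (y - \<delta>) .. R * (y + \<delta>)}"
  have S_half: "\<bar>x\<bar> \<le> R / 2" and S_peak: "N / 2 \<le> poly p x" if "x \<in> S" for x
    using rescaled_poly_ge_half_near_peak[OF t R1 deg coeffs peak(1,2)] peak(3) that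
    by (auto simp: S_def \<delta>_def)
  have S_sub: "S \<subseteq> {-R..R}" using S_half R1 by (fastforce simp: abs_le_iff)
  have S_density: "\<forall>x\<in>S. 1 / (3 * 3 ^ (50 * t)) \<le> std_normal_density x"
  proof
    fix x assume "x \<in> S"
    then have "x\<^sup>2 \<le> (R / 2)\<^sup>2" using S_half by (metis abs_ge_zero power2_abs power_mono)
    then show "1 / (3 * 3 ^ (50 * t)) \<le> std_normal_density x"
      by (intro std_normal_density_ge) (simp add: R power_divide power_mult_distrib)
  qed
  have "N / 2 * (1 / (3 * 3 ^ (50 * t))) * (R * (y + \<delta>) - R * (y - \<delta>))
      - L / R ^ (2 * (50 * t)) * real (50 * t) ^ (50 * t) \<le> max (- m) 0"
    using R1 peak(3) S_peak S_density lower S_sub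
      rescaled_poly_tail_ge[of R p t "96 ^ t * N" "50 * t"] deg coeffs
    by (intro mean_zero_poly_negative_part_ge[OF mean]) (auto simp: S_def L_def \<delta>_def mult_ac)
  moreover have "2 * L / 2 ^ (110 * t)
      \<le> N / 2 * (1 / (3 * 3 ^ (50 * t))) * (R * (y + \<delta>) - R * (y - \<delta>))"
    unfolding L_def \<delta>_def using t R1 peak(3) by (intro peak_mass_ge) auto
  moreover have "L / R ^ (2 * (50 * t)) * real (50 * t) ^ (50 * t) \<le> L / 2 ^ (110 * t)"
    using t R peak(3) by (intro tail_term_le) (auto simp: L_def)
  moreover have "2 * L / 2 ^ (110 * t) = 2 * (L / 2 ^ (110 * t))" by simp
  ultimately have "L / 2 ^ (110 * t) \<le> max (- m) 0" by linarith
  moreover have "0 < L / 2 ^ (110 * t)" using peak(3) by (simp add: L_def)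
  ultimately have "L / 2 ^ (110 * t) \<le> - m" by (simp add: max_def split: if_split_asm)
  then show ?thesis by (simp add: L_def divide_le_eq mult.commute)
qed

lemma obtain_rescaled_coeff_bound:
  fixes p :: "real poly"
  assumes t: "t \<ge> 1" and R: "R > 0" and p: "p \<noteq> 0" and deg: "degree p \<le> t"
  obtains y where "y \<in> {0..1/4}" "\<bar>poly p (R * y)\<bar> > 0"
    "\<forall>i. \<bar>coeff (pcompose p [:0, R:]) i\<bar> \<le> 96 ^ t * \<bar>poly p (R * y)\<bar>"
proof -
  define q where "q = pcompose p [:0, R:]"
  have "continuous_on {0..1/4} (\<lambda>z. \<bar>poly q z\<bar>)" by (intro continuous_intros)
  from continuous_attains_sup[OF _ _ this] obtain y
    where y: "y \<in> {0..1/4}" and y_max: "\<forall>z\<in>{0..1/4}. \<bar>poly q z\<bar> \<le> \<bar>poly q y\<bar>"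
    by auto
  have "degree q \<le> t" using deg by (simp add: q_def degree_pcompose)
  then have coeffs: "\<forall>i. \<bar>coeff q i\<bar> \<le> 96 ^ t * \<bar>poly q y\<bar>"
    using abs_coeff_le_of_bounded_on_interval[OF t, of "1/4"] y_max by simp
  have "q \<noteq> 0" using p R by (simp add: q_def pcompose_eq_0_iff)
  moreover have "q = 0" if "poly q y = 0"
    using coeffs that by (simp add: poly_eq_iff)
  ultimately have "\<bar>poly q y\<bar> > 0" by auto
  then show ?thesis
    using that y coeffs by (simp add: q_def poly_pcompose_scale)
qed

lemma peak_forces_negative_min:
  fixes p :: "real poly"
  assumes t: "t \<ge> 1" and deg: "degree p \<le> t" and mean: "gauss_expect (poly p) = 0"
    and R: "R = 20 * sqrt (real t)"
    and coeffs: "\<forall>i. \<bar>coeff (pcompose p [:0, R:]) i\<bar> \<le> 96 ^ t * \<bar>poly p (R * y)\<bar>"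
    and peak: "y \<in> {0..1/4}" "poly p (R * y) \<noteq> 0"
    and lower: "\<forall>x\<in>{-R..R}. m \<le> poly p x"
  shows "real (Suc t) * 96 ^ t * \<bar>poly p (R * y)\<bar> \<le> 2 ^ (110 * t) * - m"
proof (cases "poly p (R * y) > 0")
  case True
  with peak(1) show ?thesis
    by (intro positive_peak_forces_negative_min[OF t deg mean R coeffs _ _ _ lower]) auto
next
  case False
  have "R > 0" using t by (simp add: R)
  then have "0 \<le> R * y" "R * y \<le> R * 1" using peak(1) by (auto intro: mult_left_mono)
  then have "R * y \<in> {-R..R}" using \<open>R > 0\<close> by simp
  then have m: "m \<le> - \<bar>poly p (R * y)\<bar>" using False lower by auto
  have "real (Suc t) * 96 ^ t \<le> 2 ^ t * 2 ^ (7 * t)"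
    using real_Suc_le_two_power[of t] by (intro mult_mono) (auto simp: power_mult intro!: power_mono)
  also have "\<dots> \<le> 2 ^ (110 * t)" by (simp flip: power_add)
  finally have "real (Suc t) * 96 ^ t * \<bar>poly p (R * y)\<bar> \<le> 2 ^ (110 * t) * \<bar>poly p (R * y)\<bar>"
    by (intro mult_right_mono) auto
  also have "\<dots> \<le> 2 ^ (110 * t) * - m" using m by (intro mult_left_mono) auto
  finally show ?thesis .
qed

lemma mean_zero_poly_inf_neg_and_sup_ratio:
  fixes p :: "real poly"
  assumes t: "t \<ge> 1" and p: "p \<noteq> 0" and deg: "degree p \<le> t"
    and mean: "gauss_expect (poly p) = 0"
  defines "I \<equiv> {- 20 * sqrt (real t) .. 20 * sqrt (real t)}"
  shows "(INF x\<in>I. poly p x) < 0 \<and>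
    (SUP x\<in>I. poly p x) / \<bar>INF x\<in>I. poly p x\<bar> \<le> 2 powr (110 * real t)"
proof -
  define R where "R = 20 * sqrt (real t)"
  have R: "R > 0" using t by (simp add: R_def)
  have I: "I = {-R..R}" by (simp add: I_def R_def)
  obtain y where y: "y \<in> {0..1/4}" "\<bar>poly p (R * y)\<bar> > 0"
    and coeffs: "\<forall>i. \<bar>coeff (pcompose p [:0, R:]) i\<bar> \<le> 96 ^ t * \<bar>poly p (R * y)\<bar>"
    using obtain_rescaled_coeff_bound[OF t R p deg] .
  define N where "N = \<bar>poly p (R * y)\<bar>"
  define L where "L = real (Suc t) * 96 ^ t * N"
  have "compact I" "I \<noteq> {}" "continuous_on I (poly p)"
    using R by (auto simp: I intro: continuous_intros)
  then obtain x\<^sub>0 x\<^sub>1 where x\<^sub>0: "x\<^sub>0 \<in> I" "\<forall>x\<in>I. poly p x\<^sub>0 \<le> poly p x"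
    and x\<^sub>1: "x\<^sub>1 \<in> I" "\<forall>x\<in>I. poly p x \<le> poly p x\<^sub>1"
    by (metis continuous_attains_inf continuous_attains_sup)
  define m where "m = poly p x\<^sub>0"
  define M where "M = poly p x\<^sub>1"
  have L_le: "L \<le> 2 ^ (110 * t) * - m"
    unfolding L_def N_def m_def using x\<^sub>0 y coeffs
    by (intro peak_forces_negative_min[OF t deg mean R_def]) (auto simp: I)
  have M_le: "M \<le> L"
  proof -
    have "\<bar>x\<^sub>1\<bar> / R \<le> 1" using x\<^sub>1(1) R by (simp add: I abs_le_iff divide_le_eq)
    then have "max 1 (\<bar>x\<^sub>1\<bar> / R) = 1" by simp
    then show ?thesis
      using abs_poly_le_rescaled_coeff_bound[OF R deg coeffs, of x\<^sub>1]
      by (simp add: M_def L_def N_def mult_ac)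
  qed
  have "L > 0" using y(2) by (simp add: L_def N_def)
  then have "0 < 2 ^ (110 * t) * - m" using L_le by linarith
  then have "m < 0" by (simp add: mult_less_0_iff)
  moreover have "M / \<bar>m\<bar> \<le> 2 ^ (110 * t)"
  proof -
    have "M \<le> 2 ^ (110 * t) * \<bar>m\<bar>" using \<open>m < 0\<close> M_le L_le by simp
    then show ?thesis using \<open>m < 0\<close> by (subst pos_divide_le_eq) auto
  qed
  moreover have "(INF x\<in>I. poly p x) = m" "(SUP x\<in>I. poly p x) = M"
    using x\<^sub>0 x\<^sub>1 by (auto simp: m_def M_def intro: cInf_eq_minimum cSup_eq_maximum)
  moreover have "(2::real) ^ (110 * t) = 2 powr (110 * real t)"
    by (subst powr_realpow [symmetric]) auto
  ultimately show ?thesis by simp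
qed

theorem mainTheorem5:
  shows "\<exists>C0 C1 :: real. C0 > 0 \<and> C1 > 0 \<and>
    (\<forall>t :: nat. real t > C0 \<longrightarrow>
      (let I = {- C0 * sqrt (real t) .. C0 * sqrt (real t)} in
       \<forall>p :: real poly. p \<noteq> 0 \<longrightarrow> degree p \<le> t \<longrightarrow>
         gauss_expect (poly p) = 0 \<longrightarrow>
         (INF x\<in>I. poly p x) < 0 \<and>
         (SUP x\<in>I. poly p x) / \<bar>INF x\<in>I. poly p x\<bar> \<le> 2 powr (C1 * real t)))"
proof -
  have "\<forall>t :: nat. real t > 20 \<longrightarrow>
      (let I = {- 20 * sqrt (real t) .. 20 * sqrt (real t)} in
       \<forall>p :: real poly. p \<noteq> 0 \<longrightarrow> degree p \<le> t \<longrightarrow>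
         gauss_expect (poly p) = 0 \<longrightarrow>
         (INF x\<in>I. poly p x) < 0 \<and>
         (SUP x\<in>I. poly p x) / \<bar>INF x\<in>I. poly p x\<bar> \<le> 2 powr (110 * real t))"
    using mean_zero_poly_inf_neg_and_sup_ratio by (auto simp: Let_def)
  then show ?thesis by (intro exI[of _ 20] exI[of _ 110]) simp
qed

end
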